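(* Let $p\in[1,\infty)$. If $$\lim_{|x|\to\infty}\int_{-\infty}^{\infty}G(x,t)\,dt=0,$$ then the operator $G:L_p(\mathbb R)\to L_p(\mathbb R)$, $f\mapsto Gf$, is compact.
   Context: Let $q:\mathbb R\to\mathbb R$ be measurable with $q\in L_1^{\mathrm{loc}}(\mathbb R)$ and $q(x)\ge1$ a.e. A principal fundamental system of solutions (PFSS) of $z''=q(x)z$ is a pair $u,v$ of solutions ($C^1$, derivative locally absolutely continuous, equation a.e.) such that for all $x$: $u>0$, $v>0$, $u'<0$, $v'>0$, $v'u-u'v=1$, $u(x)=v(x)\int_x^\infty v(t)^{-2}dt$, and $u,u'\to0$ as $x\to\infty$, $v,v'\to0$ as $x\to-\infty$, $v,v'\to\infty$ as $x\to\infty$, $u,|u'|\to\infty$ as $x\to-\infty$. Fix a PFSS $\{u,v\}$. The Green function is $G(x,t)=u(x)v(t)$ for $x\ge t$ and $G(x,t)=u(t)v(x)$ for $x\le t$, and $(Gf)(x)=\int_{-\infty}^\infty G(x,t)f(t)\,dt$. *)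

theory Defs
  imports "HOL-Analysis.Analysis"
begin

definition admissible_potential :: "(real \<Rightarrow> real) \<Rightarrow> bool" where
  "admissible_potential q \<longleftrightarrow>
     q \<in> borel_measurable lborel \<and>
     (\<forall>a b. set_integrable lborel {a..b} q) \<and>
     (AE x in lborel. q x \<ge> 1)"

text \<open>Solution of z'' = q z: z is C^1 and z' is locally absolutely continuous with
  z'' = q z a.e., written out as z'(x) = z'(a) + integral from a to x of q z.\<close>
definition is_solution :: "(real \<Rightarrow> real) \<Rightarrow> (real \<Rightarrow> real) \<Rightarrow> bool" where
  "is_solution q z \<longleftrightarrow>
     (\<forall>x. (z has_real_derivative deriv z x) (at x)) \<and>
     continuous_on UNIV (deriv z) \<and>
     (\<forall>a b. set_integrable lborel {a..b} (\<lambda>t. q t * z t)) \<and>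
     (\<forall>a x. deriv z x = deriv z a + (LBINT t=a..x. q t * z t))"

definition PFSS :: "(real \<Rightarrow> real) \<Rightarrow> (real \<Rightarrow> real) \<Rightarrow> (real \<Rightarrow> real) \<Rightarrow> bool" where
  "PFSS q u v \<longleftrightarrow>
     is_solution q u \<and> is_solution q v \<and>
     (\<forall>x. u x > 0 \<and> v x > 0 \<and> deriv u x < 0 \<and> deriv v x > 0 \<and>
          deriv v x * u x - deriv u x * v x = 1 \<and>
          set_integrable lborel {x..} (\<lambda>t. 1 / (v t)\<^sup>2) \<and>
          u x = v x * (LBINT t:{x..}. 1 / (v t)\<^sup>2)) \<and>
     (u \<longlongrightarrow> 0) at_top \<and> (deriv u \<longlongrightarrow> 0) at_top \<and>
     (v \<longlongrightarrow> 0) at_bot \<and> (deriv v \<longlongrightarrow> 0) at_bot \<and>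
     filterlim v at_top at_top \<and> filterlim (deriv v) at_top at_top \<and>
     filterlim u at_top at_bot \<and> filterlim (\<lambda>x. \<bar>deriv u x\<bar>) at_top at_bot"

definition green :: "(real \<Rightarrow> real) \<Rightarrow> (real \<Rightarrow> real) \<Rightarrow> real \<Rightarrow> real \<Rightarrow> real" where
  "green u v x t = (if t \<le> x then u x * v t else u t * v x)"

definition green_op :: "(real \<Rightarrow> real) \<Rightarrow> (real \<Rightarrow> real) \<Rightarrow> (real \<Rightarrow> real) \<Rightarrow> real \<Rightarrow> real" where
  "green_op u v f x = (LINT t|lborel. green u v x t * f t)"

definition in_Lp :: "real \<Rightarrow> (real \<Rightarrow> real) \<Rightarrow> bool" where
  "in_Lp p f \<longleftrightarrow> f \<in> borel_measurable lborel \<and> integrable lborel (\<lambda>x. \<bar>f x\<bar> powr p)"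

definition Lp_norm :: "real \<Rightarrow> (real \<Rightarrow> real) \<Rightarrow> real" where
  "Lp_norm p f = (LINT x|lborel. \<bar>f x\<bar> powr p) powr (1 / p)"

definition compact_green_Lp :: "real \<Rightarrow> (real \<Rightarrow> real) \<Rightarrow> (real \<Rightarrow> real) \<Rightarrow> bool" where
  "compact_green_Lp p u v \<longleftrightarrow>
     (\<forall>f. in_Lp p f \<longrightarrow>
        (\<forall>x. integrable lborel (\<lambda>t. green u v x t * f t)) \<and> in_Lp p (green_op u v f)) \<and>
     (\<forall>F :: nat \<Rightarrow> real \<Rightarrow> real. (\<forall>n. in_Lp p (F n)) \<and> (\<exists>B. \<forall>n. Lp_norm p (F n) \<le> B) \<longrightarrow>
        (\<exists>r g. strict_mono r \<and> in_Lp p g \<and>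
           (\<lambda>n. Lp_norm p (\<lambda>x. green_op u v (F (r n)) x - g x)) \<longlonglongrightarrow> 0))"

end

theory Submission
  imports Defs "HOL-Complex_Analysis.Great_Picard"
begin

text \<open>Since \<open>q \<ge> 1\<close>, a positive solution \<open>z\<close> satisfies \<open>\<integral>\<^sub>a\<^sup>x z \<le> z'(x) - z'(a)\<close>; hence
  \<open>\<integral>\<^sub>-\<^sub>\<infinity>\<^sup>x v \<le> v'(x)\<close> and \<open>\<integral>\<^sub>x\<^sup>\<infinity> u \<le> -u'(x)\<close>, and the Wronskian identity gives
  \<open>\<integral> G(x,t) dt \<le> 1\<close> for every \<open>x\<close>; as \<open>G\<close> is symmetric, also \<open>\<integral> G(x,t) dx \<le> 1\<close> for every \<open>t\<close>.
  Jensen's inequality for the sub-probability kernel \<open>G(x,\<cdot>)\<close> gives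
  \<open>\<bar>Gf(x)\<bar>\<^sup>p \<le> \<integral> G(x,t) \<bar>f(t)\<bar>\<^sup>p dt\<close>. Integrating, \<open>G\<close> maps \<open>L\<^sub>p\<close> into itself;
  pointwise, \<open>\<bar>Gf(x)\<bar>\<^sup>p \<le> u(x) v(x) \<parallel>f\<parallel>\<^sub>p\<^sup>p\<close>, and since \<open>G(x,t)\<close> depends continuously on \<open>x\<close>
  uniformly in \<open>t\<close>, the images of a bounded sequence are equicontinuous. By a diagonal argument over
  the rationals some subsequence of the images converges pointwise. Dominated convergence gives
  convergence in \<open>L\<^sub>p\<close> on every compact interval, while the hypothesis together with
  \<open>u'(+\<infinity>) = v'(-\<infinity>) = 0\<close> makes \<open>\<integral>\<^bsub>\<bar>x\<bar> > N\<^esub> G(x,t) dx\<close> small uniformly in \<open>t\<close>,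
  which bounds the tails uniformly.\<close>

section \<open>Kernel inequalities and convergence in \<open>L\<^sub>p\<close>\<close>

lemma le_powr_Young:
  fixes a c p :: real
  assumes "0 \<le> a" "0 < c" "1 \<le> p"
  shows "a \<le> a powr p * c powr (1 - p) / p + (1 - 1 / p) * c"
proof (cases "a = 0")
  case True
  then show ?thesis using assms by (simp add: field_simps)
next
  case False
  then have a: "0 < a" and p0: "0 < p" using assms by auto
  have "(a powr p * c powr (1 - p)) powr (1 / p) = a * c powr ((1 - p) / p)"
    using a assms p0 by (simp add: powr_mult powr_powr)
  moreover have "c powr ((1 - p) / p) * c powr (1 - 1 / p) = 1"
    using assms p0 by (simp add: powr_add[symmetric] field_simps)
  ultimately have "(a powr p * c powr (1 - p)) powr (1 / p) * c powr (1 - 1 / p) = a"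
    by (simp add: mult.assoc)
  moreover have "(a powr p * c powr (1 - p)) powr (1 / p) * c powr (1 - 1 / p)
      \<le> (1 / p) * (a powr p * c powr (1 - p)) + (1 - 1 / p) * c"
    using assms a by (intro Youngs_inequality_0) (auto simp: field_simps)
  ultimately show ?thesis by simp
qed

lemma Jensen_powr_subprob_kernel:
  fixes K f :: "'a \<Rightarrow> real"
  assumes p: "1 \<le> p" and K_nonneg: "\<And>t. 0 \<le> K t"
    and [measurable]: "K \<in> borel_measurable M" "f \<in> borel_measurable M"
    and K_mass: "(\<integral>\<^sup>+t. ennreal (K t) \<partial>M) \<le> 1"
    and Kf: "integrable M (\<lambda>t. K t * \<bar>f t\<bar>)"
  shows "ennreal ((\<integral>t. K t * \<bar>f t\<bar> \<partial>M) powr p) \<le> (\<integral>\<^sup>+t. ennreal (K t * \<bar>f t\<bar> powr p) \<partial>M)"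
proof -
  define A where "A = (\<integral>t. K t * \<bar>f t\<bar> \<partial>M)"
  have "0 \<le> A" unfolding A_def using K_nonneg by (intro integral_nonneg_AE) auto
  show ?thesis
  proof (cases "A = 0 \<or> (\<integral>\<^sup>+t. ennreal (K t * \<bar>f t\<bar> powr p) \<partial>M) = \<infinity>")
    case True
    then show ?thesis using p by (auto simp: A_def[symmetric])
  next
    case False
    then have A: "0 < A" and fin: "(\<integral>\<^sup>+t. ennreal (K t * \<bar>f t\<bar> powr p) \<partial>M) < \<infinity>"
      using \<open>0 \<le> A\<close> by (auto simp: top.not_eq_extremum)
    have Kfp: "integrable M (\<lambda>t. K t * \<bar>f t\<bar> powr p)"
      using fin K_nonneg by (intro integrableI_bounded) auto
    have K: "integrable M K"
      using K_mass K_nonneg by (intro integrableI_bounded) (auto simp: order.strict_trans1)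
    define S where "S = (\<integral>t. K t * \<bar>f t\<bar> powr p \<partial>M)"
    have S_eq: "(\<integral>\<^sup>+t. ennreal (K t * \<bar>f t\<bar> powr p) \<partial>M) = ennreal S"
      unfolding S_def using Kfp K_nonneg by (intro nn_integral_eq_integral) auto
    have "ennreal (\<integral>t. K t \<partial>M) = (\<integral>\<^sup>+t. ennreal (K t) \<partial>M)"
      using K K_nonneg by (intro nn_integral_eq_integral[symmetric]) auto
    then have K_le_1: "(\<integral>t. K t \<partial>M) \<le> 1"
      using K_mass by (metis ennreal_le_1)
    define c where "c = A powr (1 - p) / p"
    \<comment> \<open>tangent line of \<open>s \<mapsto> s powr p\<close> at \<open>A\<close>; its constant term is \<open>\<ge> 0\<close>, so mass \<open>\<le> 1\<close> suffices\<close>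
    have tangent: "K t * \<bar>f t\<bar> \<le> c * (K t * \<bar>f t\<bar> powr p) + (1 - 1 / p) * A * K t" for t
      using mult_left_mono[OF le_powr_Young[of "\<bar>f t\<bar>" A p] K_nonneg[of t]] A p
      by (simp add: c_def algebra_simps)
    have "A \<le> (\<integral>t. c * (K t * \<bar>f t\<bar> powr p) + (1 - 1 / p) * A * K t \<partial>M)"
      using integral_mono[OF Kf _ tangent] Kfp K unfolding A_def[symmetric] by auto
    also have "\<dots> = c * S + (1 - 1 / p) * A * (\<integral>t. K t \<partial>M)"
      using Kfp K by (simp add: S_def)
    also have "\<dots> \<le> c * S + (1 - 1 / p) * A"
      using mult_left_mono[OF K_le_1, of "(1 - 1 / p) * A"] A p by (simp add: field_simps)
    finally have "A \<le> A powr (1 - p) * S"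
      using p by (simp add: c_def field_simps)
    then have "A * A powr (p - 1) \<le> A powr (1 - p) * S * A powr (p - 1)"
      using A by (intro mult_right_mono) auto
    also have "\<dots> = S"
      using A by (simp add: mult.assoc mult.commute[of S] powr_add[symmetric])
    finally have "A powr p \<le> S"
      using A by (simp add: powr_add[symmetric] powr_mult_base)
    then show ?thesis unfolding S_eq A_def[symmetric] by (intro ennreal_leI)
  qed
qed

lemma integrable_bounded_mult_Lp:
  fixes K f :: "real \<Rightarrow> real"
  assumes p: "1 \<le> p" and f: "in_Lp p f" and [measurable]: "K \<in> borel_measurable lborel"
    and K_nonneg: "\<And>t. 0 \<le> K t" and K_le: "\<And>t. K t \<le> c" and K: "integrable lborel K"
  shows "integrable lborel (\<lambda>t. K t * f t)"
proof (rule Bochner_Integration.integrable_bound[where f="\<lambda>t. K t + c * \<bar>f t\<bar> powr p"])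
  have [measurable]: "f \<in> borel_measurable lborel" and "integrable lborel (\<lambda>t. \<bar>f t\<bar> powr p)"
    using f unfolding in_Lp_def by auto
  then show "integrable lborel (\<lambda>t. K t + c * \<bar>f t\<bar> powr p)"
    using K by auto
  show "(\<lambda>t. K t * f t) \<in> borel_measurable lborel"
    by measurable
  have "0 \<le> c" using K_nonneg[of 0] K_le[of 0] by simp
  have "K t * \<bar>f t\<bar> \<le> K t + c * \<bar>f t\<bar> powr p" for t
  proof (cases "\<bar>f t\<bar> \<le> 1")
    case True
    then show ?thesis
      using K_nonneg[of t] \<open>0 \<le> c\<close> by (simp add: mult_left_le add_increasing2)
  next
    case False
    then have "\<bar>f t\<bar> \<le> \<bar>f t\<bar> powr p" using powr_mono[of 1 p "\<bar>f t\<bar>"] p by simp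
    then have "K t * \<bar>f t\<bar> \<le> c * \<bar>f t\<bar> powr p"
      using K_nonneg[of t] K_le[of t] False by (intro mult_mono) auto
    then show ?thesis using K_nonneg[of t] by simp
  qed
  then show "AE t in lborel. norm (K t * f t) \<le> norm (K t + c * \<bar>f t\<bar> powr p)"
    using K_nonneg \<open>0 \<le> c\<close> by (intro AE_I2) (simp add: abs_mult)
qed

lemma integral_kernel_powr_le:
  fixes K f :: "real \<Rightarrow> real"
  assumes p: "1 \<le> p" and f: "in_Lp p f" and [measurable]: "K \<in> borel_measurable lborel"
    and K_nonneg: "\<And>t. 0 \<le> K t" and K_le: "\<And>t. K t \<le> c"
    and K: "integrable lborel K" and K_mass: "(LINT t|lborel. K t) \<le> 1"
  shows "(LINT t|lborel. K t * \<bar>f t\<bar>) powr p \<le> c * (LINT t|lborel. \<bar>f t\<bar> powr p)"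
proof -
  have [measurable]: "f \<in> borel_measurable lborel" and fp: "integrable lborel (\<lambda>t. \<bar>f t\<bar> powr p)"
    using f unfolding in_Lp_def by auto
  have "0 \<le> c" using K_nonneg[of 0] K_le[of 0] by simp
  have "(\<integral>\<^sup>+t. ennreal (K t) \<partial>lborel) = ennreal (LINT t|lborel. K t)"
    using K K_nonneg by (intro nn_integral_eq_integral) auto
  then have "(\<integral>\<^sup>+t. ennreal (K t) \<partial>lborel) \<le> 1"
    using K_mass by (simp add: ennreal_le_1)
  moreover have "integrable lborel (\<lambda>t. K t * \<bar>f t\<bar>)"
    using f by (intro integrable_bounded_mult_Lp[OF p _ _ K_nonneg K_le K]) (auto simp: in_Lp_def)
  ultimately have "ennreal ((LINT t|lborel. K t * \<bar>f t\<bar>) powr p)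
      \<le> (\<integral>\<^sup>+t. ennreal (K t * \<bar>f t\<bar> powr p) \<partial>lborel)"
    by (intro Jensen_powr_subprob_kernel[where M=lborel, OF p K_nonneg]) auto
  also have "\<dots> \<le> (\<integral>\<^sup>+t. ennreal (c * \<bar>f t\<bar> powr p) \<partial>lborel)"
    using K_le by (intro nn_integral_mono ennreal_leI mult_right_mono) auto
  also have "\<dots> = ennreal (LINT t|lborel. c * \<bar>f t\<bar> powr p)"
    using fp \<open>0 \<le> c\<close> by (intro nn_integral_eq_integral) auto
  finally show ?thesis
    using \<open>0 \<le> c\<close> by (simp add: ennreal_le_iff integral_nonneg_AE)
qed

lemma abs_diff_powr_le:
  fixes a b p :: real
  assumes "0 \<le> p"
  shows "\<bar>a - b\<bar> powr p \<le> 2 powr p * (\<bar>a\<bar> powr p + \<bar>b\<bar> powr p)"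
proof -
  define m where "m = max \<bar>a\<bar> \<bar>b\<bar>"
  have "\<bar>a - b\<bar> powr p \<le> (2 * m) powr p"
    unfolding m_def using assms by (intro powr_mono2) auto
  also have "\<dots> = 2 powr p * m powr p"
    unfolding m_def by (simp add: powr_mult)
  also have "m powr p \<le> \<bar>a\<bar> powr p + \<bar>b\<bar> powr p"
    unfolding m_def by (auto simp: max_def)
  finally show ?thesis by simp
qed

lemma set_nn_integral_UN_le:
  assumes "incseq A" and [measurable]: "\<And>i. A i \<in> sets M" "f \<in> borel_measurable M"
    and le: "\<And>i. (\<integral>\<^sup>+x\<in>A i. f x \<partial>M) \<le> c"
  shows "(\<integral>\<^sup>+x\<in>(\<Union>i. A i). f x \<partial>M) \<le> c"
proof (rule LIMSEQ_le_const2[OF nn_integral_LIMSEQ])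
  show "incseq (\<lambda>i x. f x * indicator (A i) x)"
    using \<open>incseq A\<close> by (auto simp: incseq_def le_fun_def split: split_indicator)
  show "(\<lambda>i. f x * indicator (A i) x) \<longlonglongrightarrow> f x * indicator (\<Union>i. A i) x" for x
  proof (cases "x \<in> (\<Union>i. A i)")
    case True
    then obtain i0 where "x \<in> A i0" by blast
    then have "\<forall>\<^sub>F i in sequentially. f x * indicator (A i) x = f x * indicator (\<Union>i. A i) x"
      using \<open>incseq A\<close>
      by (auto simp: eventually_sequentially incseq_def intro!: exI[of _ i0] split: split_indicator)
    then show ?thesis by (rule tendsto_eventually)
  qed simp
qed (use le in auto)

lemma set_nn_integral_powr_limit_le:
  fixes h :: "nat \<Rightarrow> 'a \<Rightarrow> real"
  assumes p: "0 < p" and [measurable]: "\<And>k. h k \<in> borel_measurable M" "S \<in> sets M"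
    and lim: "\<And>x. (\<lambda>k. h k x) \<longlonglongrightarrow> g x"
    and le: "\<And>k. (\<integral>\<^sup>+x\<in>S. ennreal (\<bar>h k x\<bar> powr p) \<partial>M) \<le> c"
  shows "(\<integral>\<^sup>+x\<in>S. ennreal (\<bar>g x\<bar> powr p) \<partial>M) \<le> c"
proof -
  have conv: "(\<lambda>k. ennreal (\<bar>h k x\<bar> powr p) * indicator S x) \<longlonglongrightarrow> ennreal (\<bar>g x\<bar> powr p) * indicator S x" for x
  proof (cases "x \<in> S")
    case True
    have "(\<lambda>k. \<bar>h k x\<bar> powr p) \<longlonglongrightarrow> \<bar>g x\<bar> powr p"
      using p by (intro tendsto_powr' tendsto_rabs lim) auto
    then show ?thesis using True by (simp add: tendsto_ennrealI)
  qed simp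
  then have "(\<integral>\<^sup>+x\<in>S. ennreal (\<bar>g x\<bar> powr p) \<partial>M)
      = (\<integral>\<^sup>+x. liminf (\<lambda>k. ennreal (\<bar>h k x\<bar> powr p) * indicator S x) \<partial>M)"
    by (intro nn_integral_cong) (simp add: lim_imp_Liminf[OF _ conv])
  also have "\<dots> \<le> liminf (\<lambda>k. \<integral>\<^sup>+x\<in>S. ennreal (\<bar>h k x\<bar> powr p) \<partial>M)"
    by (intro nn_integral_liminf) measurable
  also have "\<dots> \<le> limsup (\<lambda>k. \<integral>\<^sup>+x\<in>S. ennreal (\<bar>h k x\<bar> powr p) \<partial>M)"
    by (intro Liminf_le_Limsup) simp
  also have "\<dots> \<le> c"
    using le by (intro Limsup_bounded always_eventually allI)
  finally show ?thesis .
qed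

lemma equicontinuous_imp_pointwise_convergent_subseq:
  fixes h :: "nat \<Rightarrow> real \<Rightarrow> real" and M :: "real \<Rightarrow> real"
  assumes bound: "\<And>k x. \<bar>h k x\<bar> \<le> M x"
    and equicont: "\<And>x \<epsilon>. 0 < \<epsilon> \<Longrightarrow> \<exists>\<delta>>0. \<forall>y k. \<bar>y - x\<bar> < \<delta> \<longrightarrow> \<bar>h k y - h k x\<bar> < \<epsilon>"
  obtains s g where "strict_mono s" "\<And>x. (\<lambda>k. h (s k) x) \<longlonglongrightarrow> g x"
proof -
  have M: "0 < 1 + M x" for x
    using bound[of 0 x] by linarith
  \<comment> \<open>dividing by \<open>1 + M x\<close> makes the family uniformly bounded\<close>
  obtain s where s: "strict_mono s"
    and rat: "\<And>y. y \<in> \<rat> \<Longrightarrow> \<exists>l. (\<lambda>k. h (s k) y / (1 + M y)) \<longlonglongrightarrow> l"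
  proof (rule function_convergent_subsequence[OF countable_rat, of "\<lambda>k y. h k y / (1 + M y)" 1])
    show "norm (h k y / (1 + M y)) \<le> 1" for k y
      using bound[of k y] M[of y] by (simp add: abs_divide)
  qed blast
  have "Cauchy (\<lambda>k. h (s k) x)" for x
  proof (rule CauchyI)
    fix e :: real assume "0 < e"
    then obtain \<delta> where "0 < \<delta>" and \<delta>: "\<And>y k. \<bar>y - x\<bar> < \<delta> \<Longrightarrow> \<bar>h k y - h k x\<bar> < e / 3"
      using equicont[of "e / 3" x] by auto
    obtain y where "y \<in> \<rat>" "x < y" "y < x + \<delta>"
      using Rats_dense_in_real[of x "x + \<delta>"] \<open>0 < \<delta>\<close> by auto
    then obtain l where "(\<lambda>k. h (s k) y / (1 + M y)) \<longlonglongrightarrow> l"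
      using rat by blast
    then have "(\<lambda>k. h (s k) y / (1 + M y) * (1 + M y)) \<longlonglongrightarrow> l * (1 + M y)"
      by (intro tendsto_mult_right)
    then have Cauchy_y: "Cauchy (\<lambda>k. h (s k) y)"
      using M[of y] by (simp add: LIMSEQ_imp_Cauchy)
    obtain N where N: "\<And>m n. N \<le> m \<Longrightarrow> N \<le> n \<Longrightarrow> \<bar>h (s m) y - h (s n) y\<bar> < e / 3"
      using CauchyD[OF Cauchy_y, of "e / 3"] \<open>0 < e\<close> by auto
    have y: "\<bar>y - x\<bar> < \<delta>"
      using \<open>x < y\<close> \<open>y < x + \<delta>\<close> by simp
    have "\<bar>h (s m) x - h (s n) x\<bar> < e" if "N \<le> m" "N \<le> n" for m n
      using \<delta>[OF y, of "s m"] \<delta>[OF y, of "s n"] N[OF that] by linarith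
    then show "\<exists>N. \<forall>m\<ge>N. \<forall>n\<ge>N. norm (h (s m) x - h (s n) x) < e"
      by auto
  qed
  then have "(\<lambda>k. h (s k) x) \<longlonglongrightarrow> lim (\<lambda>k. h (s k) x)" for x
    by (simp add: Cauchy_convergent_iff convergent_LIMSEQ_iff)
  then show thesis
    by (rule that[OF s])
qed

lemma nn_integral_split_Icc:
  fixes f :: "real \<Rightarrow> ennreal"
  assumes [measurable]: "f \<in> borel_measurable lborel"
  shows "(\<integral>\<^sup>+x. f x \<partial>lborel) = (\<integral>\<^sup>+x\<in>{-N..N}. f x \<partial>lborel) + (\<integral>\<^sup>+x\<in>{x. N < \<bar>x\<bar>}. f x \<partial>lborel)"
  by (subst nn_integral_add[symmetric]) (auto intro!: nn_integral_cong split: split_indicator)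

lemma tendsto_set_nn_integral_powr_diff:
  fixes h :: "nat \<Rightarrow> real \<Rightarrow> real" and g :: "real \<Rightarrow> real"
  assumes p: "0 < p" and [measurable]: "\<And>k. h k \<in> borel_measurable lborel" "g \<in> borel_measurable lborel"
    and lim: "\<And>x. (\<lambda>k. h k x) \<longlonglongrightarrow> g x"
    and bound: "\<And>k x. x \<in> S \<Longrightarrow> \<bar>h k x - g x\<bar> \<le> D"
    and S[measurable]: "S \<in> sets lborel" and "emeasure lborel S < \<infinity>"
  shows "(\<lambda>k. \<integral>\<^sup>+x\<in>S. ennreal (\<bar>h k x - g x\<bar> powr p) \<partial>lborel) \<longlonglongrightarrow> 0"
proof -
  have bound: "AE x in lborel. ennreal (\<bar>h k x - g x\<bar> powr p) * indicator S x \<le> ennreal (D powr p) * indicator S x" for k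
    using bound p by (intro AE_I2) (auto intro: ennreal_leI powr_mono2 split: split_indicator)
  have finite: "(\<integral>\<^sup>+x. ennreal (D powr p) * indicator S x \<partial>lborel) < \<infinity>"
    using \<open>emeasure lborel S < \<infinity>\<close> by (simp add: nn_integral_cmult_indicator[OF S] ennreal_mult_less_top)
  have "(\<lambda>k. \<bar>h k x - g x\<bar> powr p) \<longlonglongrightarrow> 0" for x
    using p lim[of x] by (intro tendsto_zero_powrI[where b=p]) (auto simp: LIM_zero tendsto_rabs_zero)
  then have "(\<lambda>k. ennreal (\<bar>h k x - g x\<bar> powr p) * indicator S x) \<longlonglongrightarrow> 0" for x
    by (cases "x \<in> S") (auto simp: tendsto_ennrealI[where x=0, simplified])
  then have "AE x in lborel. (\<lambda>k. ennreal (\<bar>h k x - g x\<bar> powr p) * indicator S x) \<longlonglongrightarrow> 0"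
    by simp
  from nn_integral_dominated_convergence[OF _ _ _ bound finite this] show ?thesis
    by simp
qed

lemma set_nn_integral_powr_diff_le:
  fixes a b :: "'a \<Rightarrow> real"
  assumes p: "0 \<le> p" and "0 \<le> \<epsilon>"
    and [measurable]: "a \<in> borel_measurable M" "b \<in> borel_measurable M" "S \<in> sets M"
    and a: "(\<integral>\<^sup>+x\<in>S. ennreal (\<bar>a x\<bar> powr p) \<partial>M) \<le> ennreal \<epsilon>"
    and b: "(\<integral>\<^sup>+x\<in>S. ennreal (\<bar>b x\<bar> powr p) \<partial>M) \<le> ennreal \<epsilon>"
  shows "(\<integral>\<^sup>+x\<in>S. ennreal (\<bar>a x - b x\<bar> powr p) \<partial>M) \<le> ennreal (2 powr p * (2 * \<epsilon>))"
proof -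
  have "(\<integral>\<^sup>+x\<in>S. ennreal (\<bar>a x - b x\<bar> powr p) \<partial>M)
      \<le> (\<integral>\<^sup>+x. ennreal (2 powr p) * (ennreal (\<bar>a x\<bar> powr p) * indicator S x + ennreal (\<bar>b x\<bar> powr p) * indicator S x) \<partial>M)"
  proof (intro nn_integral_mono)
    fix x
    have "ennreal (\<bar>a x - b x\<bar> powr p) \<le> ennreal (2 powr p * (\<bar>a x\<bar> powr p + \<bar>b x\<bar> powr p))"
      by (intro ennreal_leI abs_diff_powr_le p)
    also have "\<dots> = ennreal (2 powr p) * (ennreal (\<bar>a x\<bar> powr p) + ennreal (\<bar>b x\<bar> powr p))"
      by (simp add: ennreal_mult ennreal_plus)
    finally show "ennreal (\<bar>a x - b x\<bar> powr p) * indicator S x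
        \<le> ennreal (2 powr p) * (ennreal (\<bar>a x\<bar> powr p) * indicator S x + ennreal (\<bar>b x\<bar> powr p) * indicator S x)"
      by (auto split: split_indicator)
  qed
  also have "\<dots> = ennreal (2 powr p) * ((\<integral>\<^sup>+x\<in>S. ennreal (\<bar>a x\<bar> powr p) \<partial>M) + (\<integral>\<^sup>+x\<in>S. ennreal (\<bar>b x\<bar> powr p) \<partial>M))"
    by (simp add: nn_integral_cmult nn_integral_add)
  also have "\<dots> \<le> ennreal (2 powr p) * (ennreal \<epsilon> + ennreal \<epsilon>)"
    by (intro mult_left_mono add_mono a b) auto
  also have "\<dots> = ennreal (2 powr p * (2 * \<epsilon>))"
    using \<open>0 \<le> \<epsilon>\<close> by (simp add: ennreal_mult[symmetric] ennreal_plus[symmetric] del: ennreal_plus)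
  finally show ?thesis .
qed

lemma set_nn_integral_Icc_powr_bounded:
  fixes f :: "real \<Rightarrow> real"
  assumes "\<And>x. x \<in> {-N..N} \<Longrightarrow> \<bar>f x\<bar> \<le> D" "0 \<le> p"
  shows "(\<integral>\<^sup>+x\<in>{-N..N}. ennreal (\<bar>f x\<bar> powr p) \<partial>lborel) < \<infinity>"
proof -
  have "(\<integral>\<^sup>+x\<in>{-N..N}. ennreal (\<bar>f x\<bar> powr p) \<partial>lborel) \<le> (\<integral>\<^sup>+x. ennreal (D powr p) * indicator {-N..N} x \<partial>lborel)"
    using assms by (intro nn_integral_mono) (auto intro!: ennreal_leI powr_mono2 split: split_indicator)
  also have "\<dots> < \<infinity>"
    by (simp add: nn_integral_cmult_indicator[of "{-N..N}"] emeasure_lborel_Icc_eq ennreal_mult_less_top)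
  finally show ?thesis .
qed

lemma in_Lp_limit_of_tight_locally_bounded:
  fixes h :: "nat \<Rightarrow> real \<Rightarrow> real" and g :: "real \<Rightarrow> real"
  assumes p: "0 < p" and [measurable]: "\<And>k. h k \<in> borel_measurable lborel"
    and lim: "\<And>x. (\<lambda>k. h k x) \<longlonglongrightarrow> g x"
    and bounded: "\<And>N. \<exists>D. \<forall>k. \<forall>x\<in>{-N..N}. \<bar>h k x\<bar> \<le> D"
    and tight: "\<And>\<epsilon>. 0 < \<epsilon> \<Longrightarrow> \<exists>N. \<forall>k. (\<integral>\<^sup>+x\<in>{x. N < \<bar>x\<bar>}. ennreal (\<bar>h k x\<bar> powr p) \<partial>lborel) \<le> ennreal \<epsilon>"
  shows "in_Lp p g"
  unfolding in_Lp_def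
proof
  show [measurable]: "g \<in> borel_measurable lborel"
    by (rule borel_measurable_LIMSEQ_real[OF lim]) simp
  obtain N where N: "\<And>k. (\<integral>\<^sup>+x\<in>{x. N < \<bar>x\<bar>}. ennreal (\<bar>h k x\<bar> powr p) \<partial>lborel) \<le> ennreal 1"
    using tight[of 1] by auto
  obtain D where "\<And>k x. x \<in> {-N..N} \<Longrightarrow> \<bar>h k x\<bar> \<le> D"
    using bounded[of N] by blast
  then have "\<bar>g x\<bar> \<le> D" if "x \<in> {-N..N}" for x
    using that by (intro LIMSEQ_le_const2[OF tendsto_rabs[OF lim]]) auto
  then have "(\<integral>\<^sup>+x\<in>{-N..N}. ennreal (\<bar>g x\<bar> powr p) \<partial>lborel) < \<infinity>"
    using p by (intro set_nn_integral_Icc_powr_bounded) auto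
  moreover have "(\<integral>\<^sup>+x\<in>{x. N < \<bar>x\<bar>}. ennreal (\<bar>g x\<bar> powr p) \<partial>lborel) < \<infinity>"
    using order.strict_trans1[OF set_nn_integral_powr_limit_le[OF p _ _ lim N]] by simp
  moreover have "(\<integral>\<^sup>+x. ennreal (\<bar>g x\<bar> powr p) \<partial>lborel)
      = (\<integral>\<^sup>+x\<in>{-N..N}. ennreal (\<bar>g x\<bar> powr p) \<partial>lborel) + (\<integral>\<^sup>+x\<in>{x. N < \<bar>x\<bar>}. ennreal (\<bar>g x\<bar> powr p) \<partial>lborel)"
    by (rule nn_integral_split_Icc) simp
  ultimately have "(\<integral>\<^sup>+x. ennreal (\<bar>g x\<bar> powr p) \<partial>lborel) < \<infinity>"
    by simp
  then show "integrable lborel (\<lambda>x. \<bar>g x\<bar> powr p)"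
    by (intro integrableI_bounded) auto
qed

lemma Lp_convergence_of_tight_locally_bounded:
  fixes h :: "nat \<Rightarrow> real \<Rightarrow> real" and g :: "real \<Rightarrow> real"
  assumes p: "0 < p" and [measurable]: "\<And>k. h k \<in> borel_measurable lborel"
    and lim: "\<And>x. (\<lambda>k. h k x) \<longlonglongrightarrow> g x"
    and bounded: "\<And>N. \<exists>D. \<forall>k. \<forall>x\<in>{-N..N}. \<bar>h k x\<bar> \<le> D"
    and tight: "\<And>\<epsilon>. 0 < \<epsilon> \<Longrightarrow> \<exists>N. \<forall>k. (\<integral>\<^sup>+x\<in>{x. N < \<bar>x\<bar>}. ennreal (\<bar>h k x\<bar> powr p) \<partial>lborel) \<le> ennreal \<epsilon>"
  shows "(\<lambda>k. LINT x|lborel. \<bar>h k x - g x\<bar> powr p) \<longlonglongrightarrow> 0"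
proof (rule LIMSEQ_I)
  fix \<epsilon> :: real assume "0 < \<epsilon>"
  have [measurable]: "g \<in> borel_measurable lborel"
    by (rule borel_measurable_LIMSEQ_real[OF lim]) simp
  define \<eta> where "\<eta> = \<epsilon> / (4 * 2 powr p)"
  have "0 < \<eta>" using \<open>0 < \<epsilon>\<close> by (simp add: \<eta>_def)
  then obtain N where N: "\<And>k. (\<integral>\<^sup>+x\<in>{x. N < \<bar>x\<bar>}. ennreal (\<bar>h k x\<bar> powr p) \<partial>lborel) \<le> ennreal \<eta>"
    using tight by blast
  then have tail: "(\<integral>\<^sup>+x\<in>{x. N < \<bar>x\<bar>}. ennreal (\<bar>h k x - g x\<bar> powr p) \<partial>lborel) \<le> ennreal (2 powr p * (2 * \<eta>))" for k
    using p \<open>0 < \<eta>\<close> set_nn_integral_powr_limit_le[OF p _ _ lim N]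
    by (intro set_nn_integral_powr_diff_le[OF _ _ _ _ _ N]) auto
  obtain D where D: "\<And>k x. x \<in> {-N..N} \<Longrightarrow> \<bar>h k x\<bar> \<le> D"
    using bounded[of N] by blast
  then have g_le: "\<bar>g x\<bar> \<le> D" if "x \<in> {-N..N}" for x
    using that by (intro LIMSEQ_le_const2[OF tendsto_rabs[OF lim]]) auto
  have "\<bar>h k x - g x\<bar> \<le> 2 * D" if "x \<in> {-N..N}" for k x
    using D[OF that, of k] g_le[OF that] by linarith
  then have "(\<lambda>k. \<integral>\<^sup>+x\<in>{-N..N}. ennreal (\<bar>h k x - g x\<bar> powr p) \<partial>lborel) \<longlonglongrightarrow> 0"
    using p lim by (intro tendsto_set_nn_integral_powr_diff[where D="2 * D"]) (auto simp: emeasure_lborel_Icc_eq)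
  then obtain k0 where k0: "\<And>k. k0 \<le> k \<Longrightarrow> (\<integral>\<^sup>+x\<in>{-N..N}. ennreal (\<bar>h k x - g x\<bar> powr p) \<partial>lborel) < ennreal (\<epsilon> / 4)"
    using \<open>0 < \<epsilon>\<close> order_tendstoD(2)[of _ 0 sequentially "ennreal (\<epsilon> / 4)"]
    by (auto simp: eventually_sequentially)
  have nn_le: "(\<integral>\<^sup>+x. ennreal (\<bar>h k x - g x\<bar> powr p) \<partial>lborel) \<le> ennreal (3 * \<epsilon> / 4)" if "k0 \<le> k" for k
  proof -
    have "(\<integral>\<^sup>+x. ennreal (\<bar>h k x - g x\<bar> powr p) \<partial>lborel)
        = (\<integral>\<^sup>+x\<in>{-N..N}. ennreal (\<bar>h k x - g x\<bar> powr p) \<partial>lborel)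
          + (\<integral>\<^sup>+x\<in>{x. N < \<bar>x\<bar>}. ennreal (\<bar>h k x - g x\<bar> powr p) \<partial>lborel)"
      by (rule nn_integral_split_Icc) simp
    also have "\<dots> \<le> ennreal (\<epsilon> / 4) + ennreal (2 powr p * (2 * \<eta>))"
      using less_imp_le[OF k0[OF that]] tail by (rule add_mono)
    also have "\<dots> = ennreal (3 * \<epsilon> / 4)"
      using \<open>0 < \<epsilon>\<close> by (simp add: \<eta>_def ennreal_plus[symmetric] del: ennreal_plus)
    finally show ?thesis .
  qed
  have "(LINT x|lborel. \<bar>h k x - g x\<bar> powr p) \<le> 3 * \<epsilon> / 4" if "k0 \<le> k" for k
    using enn2real_leI[OF _ nn_le[OF that]] \<open>0 < \<epsilon>\<close> by (simp add: integral_eq_nn_integral)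
  moreover have "0 \<le> (LINT x|lborel. \<bar>h k x - g x\<bar> powr p)" for k
    by (intro integral_nonneg_AE) auto
  ultimately have "norm ((LINT x|lborel. \<bar>h k x - g x\<bar> powr p) - 0) < \<epsilon>" if "k0 \<le> k" for k
    using that \<open>0 < \<epsilon>\<close> by fastforce
  then show "\<exists>k0. \<forall>k\<ge>k0. norm ((LINT x|lborel. \<bar>h k x - g x\<bar> powr p) - 0) < \<epsilon>"
    by blast
qed

lemma integral_powr_le_of_Lp_norm_le:
  assumes "0 < p" and "Lp_norm p f \<le> B"
  shows "(LINT x|lborel. \<bar>f x\<bar> powr p) \<le> B powr p"
proof -
  have "0 \<le> (LINT x|lborel. \<bar>f x\<bar> powr p)"
    by (intro integral_nonneg_AE) auto
  then have "(LINT x|lborel. \<bar>f x\<bar> powr p) = Lp_norm p f powr p"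
    using assms by (simp add: Lp_norm_def powr_powr)
  also have "\<dots> \<le> B powr p"
    using assms by (intro powr_mono2) (auto simp: Lp_norm_def)
  finally show ?thesis .
qed

section \<open>The principal fundamental system and its Green function\<close>

lemma set_nn_integral_solution_le:
  fixes q z :: "real \<Rightarrow> real"
  assumes sol: "is_solution q z" and q: "AE t in lborel. 1 \<le> q t" and pos: "\<And>t. 0 < z t"
    and "a \<le> x"
  shows "(\<integral>\<^sup>+t\<in>{a..x}. ennreal (z t) \<partial>lborel) \<le> ennreal (deriv z x - deriv z a)"
proof -
  have "continuous_on UNIV z"
    using sol unfolding is_solution_def by (meson DERIV_isCont continuous_at_imp_continuous_on)
  then have [measurable]: "z \<in> borel_measurable borel"
    by (rule borel_measurable_continuous_onI)
  have qz: "set_integrable lborel {a..x} (\<lambda>t. q t * z t)"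
    and FTC: "deriv z x = deriv z a + (LBINT t=a..x. q t * z t)"
    using sol unfolding is_solution_def by auto
  have "(\<integral>\<^sup>+t\<in>{a..x}. ennreal (z t) \<partial>lborel) \<le> (\<integral>\<^sup>+t. ennreal (indicator {a..x} t * (q t * z t)) \<partial>lborel)"
  proof (rule nn_integral_mono_AE)
    have "z t \<le> q t * z t" if "1 \<le> q t" for t
      using pos[of t] that by simp
    then show "AE t in lborel. ennreal (z t) * indicator {a..x} t \<le> ennreal (indicator {a..x} t * (q t * z t))"
      using q by (auto elim!: eventually_mono intro!: ennreal_leI split: split_indicator)
  qed
  also have "\<dots> = ennreal (LINT t|lborel. indicator {a..x} t * (q t * z t))"
    using qz q pos unfolding set_integrable_def
    by (intro nn_integral_eq_integral)
      (auto elim!: eventually_mono simp: indicator_def intro!: mult_nonneg_nonneg less_imp_le[OF pos])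
  also have "\<dots> = ennreal (LBINT t:{a..x}. q t * z t)"
    by (simp add: set_lebesgue_integral_def)
  also have "\<dots> = ennreal (deriv z x - deriv z a)"
    using FTC \<open>a \<le> x\<close> by (simp add: interval_integral_Icc)
  finally show ?thesis .
qed

locale principal_system =
  fixes q u v :: "real \<Rightarrow> real"
  assumes admissible: "admissible_potential q" and PFSS: "PFSS q u v"
begin

lemma u_solution: "is_solution q u" and v_solution: "is_solution q v"
  using PFSS unfolding PFSS_def by auto

lemma u_pos: "0 < u x" and v_pos: "0 < v x" and deriv_u_neg: "deriv u x < 0"
  and deriv_v_pos: "0 < deriv v x" and wronskian: "deriv v x * u x - deriv u x * v x = 1"
  using PFSS unfolding PFSS_def by blast+

lemma u_nonneg [simp]: "0 \<le> u x" and v_nonneg [simp]: "0 \<le> v x"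
  using u_pos[of x] v_pos[of x] by auto

lemma q_ge_1: "AE x in lborel. 1 \<le> q x"
  using admissible unfolding admissible_potential_def by auto

lemma has_deriv_u: "(u has_real_derivative deriv u x) (at x)"
  and has_deriv_v: "(v has_real_derivative deriv v x) (at x)"
  using u_solution v_solution unfolding is_solution_def by auto

lemma isCont_u: "isCont u x" and isCont_v: "isCont v x"
  using has_deriv_u has_deriv_v by (blast intro: DERIV_isCont)+

lemma u_measurable [measurable]: "u \<in> borel_measurable borel"
  and v_measurable [measurable]: "v \<in> borel_measurable borel"
  using isCont_u isCont_v
  by (auto intro!: borel_measurable_continuous_onI continuous_at_imp_continuous_on)

lemma v_mono: "x \<le> y \<Longrightarrow> v x \<le> v y"
  using DERIV_pos_imp_increasing[of x y v] has_deriv_v deriv_v_pos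
  by (cases "x = y") (auto intro: less_imp_le)

lemma u_antimono: "x \<le> y \<Longrightarrow> u y \<le> u x"
  using DERIV_neg_imp_decreasing[of x y u] has_deriv_u deriv_u_neg
  by (cases "x = y") (auto intro: less_imp_le)

lemma set_nn_integral_v_atMost: "(\<integral>\<^sup>+t\<in>{..x}. ennreal (v t) \<partial>lborel) \<le> ennreal (deriv v x)"
proof -
  have "{..x} = (\<Union>i. {x - real i..x})"
    by (auto simp: atMost_def) (metis add.commute diff_le_eq real_arch_simple)
  moreover have "(\<integral>\<^sup>+t\<in>{x - real i..x}. ennreal (v t) \<partial>lborel) \<le> ennreal (deriv v x)" for i
    using set_nn_integral_solution_le[OF v_solution q_ge_1 v_pos, of "x - real i" x] deriv_v_pos[of "x - real i"]
    by (simp add: order_trans ennreal_leI)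
  ultimately show ?thesis
    by (simp add: set_nn_integral_UN_le incseq_def)
qed

lemma set_nn_integral_u_atLeast: "(\<integral>\<^sup>+t\<in>{x..}. ennreal (u t) \<partial>lborel) \<le> ennreal (- deriv u x)"
proof -
  have "{x..} = (\<Union>i. {x..x + real i})"
    by (auto simp: atLeast_def) (metis add.commute diff_le_eq real_arch_simple)
  moreover have "(\<integral>\<^sup>+t\<in>{x..x + real i}. ennreal (u t) \<partial>lborel) \<le> ennreal (- deriv u x)" for i
    using set_nn_integral_solution_le[OF u_solution q_ge_1 u_pos, of x "x + real i"] deriv_u_neg[of "x + real i"]
    by (simp add: order_trans ennreal_leI)
  ultimately show ?thesis
    by (simp add: set_nn_integral_UN_le incseq_def)
qed

lemma green_sym: "green u v x t = green u v t x"
  by (auto simp: green_def)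

lemma green_pos: "0 < green u v x t"
  using u_pos v_pos by (auto simp: green_def)

lemma green_le: "green u v x t \<le> u x * v x"
  using v_mono[of t x] u_antimono[of x t] by (auto simp: green_def intro: mult_left_mono mult_right_mono)

lemma green_measurable [measurable]:
  "(\<lambda>z. green u v (fst z) (snd z)) \<in> borel_measurable (lborel \<Otimes>\<^sub>M lborel)"
  "green u v x \<in> borel_measurable lborel" "(\<lambda>x. green u v x t) \<in> borel_measurable lborel"
  unfolding green_def by measurable

lemma nn_integral_green_le_1: "(\<integral>\<^sup>+t. ennreal (green u v x t) \<partial>lborel) \<le> 1"
proof -
  have "(\<integral>\<^sup>+t. ennreal (green u v x t) \<partial>lborel)
      \<le> (\<integral>\<^sup>+t. ennreal (u x) * (ennreal (v t) * indicator {..x} t) + ennreal (v x) * (ennreal (u t) * indicator {x..} t) \<partial>lborel)"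
    by (intro nn_integral_mono)
      (auto simp: green_def ennreal_mult mult.commute split: split_indicator intro: add_increasing2 add_increasing)
  also have "\<dots> = ennreal (u x) * (\<integral>\<^sup>+t\<in>{..x}. ennreal (v t) \<partial>lborel) + ennreal (v x) * (\<integral>\<^sup>+t\<in>{x..}. ennreal (u t) \<partial>lborel)"
    by (simp add: nn_integral_add nn_integral_cmult)
  also have "\<dots> \<le> ennreal (u x) * ennreal (deriv v x) + ennreal (v x) * ennreal (- deriv u x)"
    by (intro add_mono mult_left_mono set_nn_integral_v_atMost set_nn_integral_u_atLeast) auto
  also have "\<dots> = ennreal (deriv v x * u x - deriv u x * v x)"
    using deriv_v_pos[of x] deriv_u_neg[of x]
    by (simp add: ennreal_mult[symmetric] mult.commute, subst ennreal_plus[symmetric])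
      (auto simp: mult_nonneg_nonpos)
  finally show ?thesis
    by (simp add: wronskian)
qed

lemma integrable_green: "integrable lborel (green u v x)"
  using nn_integral_green_le_1[of x] green_pos[of x]
  by (intro integrableI_bounded) (auto simp: order.strict_trans1 less_imp_le)

lemma nn_integral_green_eq: "(\<integral>\<^sup>+t. ennreal (green u v x t) \<partial>lborel) = ennreal (LINT t|lborel. green u v x t)"
  using integrable_green[of x] green_pos[of x] by (intro nn_integral_eq_integral) (auto intro: less_imp_le)

lemma integral_green_le_1: "(LINT t|lborel. green u v x t) \<le> 1"
  using nn_integral_green_le_1[of x] unfolding nn_integral_green_eq by (simp add: ennreal_le_1)

lemma abs_green_diff_le_ordered:
  assumes "-N \<le> x" "x \<le> y" "y \<le> N"
  shows "\<bar>green u v y t - green u v x t\<bar> \<le> v N * (u x - u y) + u (-N) * (v y - v x)"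
proof -
  have u: "u y \<le> u x" "u x \<le> u (-N)" and v: "v x \<le> v y" "v y \<le> v N"
    using assms u_antimono v_mono by auto
  consider "t \<le> x" | "x < t" "t \<le> y" | "y < t"
    by linarith
  then show ?thesis
  proof cases
    case 1
    then have "green u v y t - green u v x t = - ((u x - u y) * v t)"
      using assms by (auto simp: green_def algebra_simps)
    then have "\<bar>green u v y t - green u v x t\<bar> = (u x - u y) * v t"
      using u by simp
    also have "\<dots> \<le> (u x - u y) * v N"
      using 1 assms u by (intro mult_left_mono v_mono) auto
    finally show ?thesis
      using u v by (simp add: mult.commute add_increasing2)
  next
    case 2
    then have "green u v y t - green u v x t = u y * (v t - v x) - v x * (u t - u y)"
      by (auto simp: green_def algebra_simps)
    moreover have vt: "v x \<le> v t" "v t \<le> v y" and ut: "u y \<le> u t" "u t \<le> u x"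
      using 2 v_mono u_antimono by auto
    moreover have "u y * (v t - v x) \<le> u (-N) * (v y - v x)"
      using u vt by (intro mult_mono) auto
    moreover have "v x * (u t - u y) \<le> v N * (u x - u y)"
      using v ut by (intro mult_mono) auto
    moreover have "0 \<le> u y * (v t - v x)" "0 \<le> v x * (u t - u y)"
      using vt ut by auto
    ultimately show ?thesis
      by linarith
  next
    case 3
    then have "green u v y t - green u v x t = u t * (v y - v x)"
      using assms by (auto simp: green_def algebra_simps)
    then have "\<bar>green u v y t - green u v x t\<bar> = u t * (v y - v x)"
      using v by simp
    also have "\<dots> \<le> u (-N) * (v y - v x)"
      using 3 assms v by (intro mult_right_mono u_antimono) auto
    finally show ?thesis
      using u v by (simp add: add_increasing)
  qed
qed

lemma abs_green_diff_le:
  assumes "x \<in> {-N..N}" "y \<in> {-N..N}"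
  shows "\<bar>green u v y t - green u v x t\<bar> \<le> v N * \<bar>u x - u y\<bar> + u (-N) * \<bar>v x - v y\<bar>"
proof (cases "x \<le> y")
  case True
  then show ?thesis
    using abs_green_diff_le_ordered[of N x y t] assms u_antimono[OF True] v_mono[OF True] by simp
next
  case False
  then show ?thesis
    using abs_green_diff_le_ordered[of N y x t] assms u_antimono[of y x] v_mono[of y x]
    by (simp add: abs_minus_commute)
qed

lemma set_nn_integral_green_tail_le:
  assumes "\<bar>t\<bar> \<le> M" "M \<le> N"
  shows "(\<integral>\<^sup>+x\<in>{x. N < \<bar>x\<bar>}. ennreal (green u v x t) \<partial>lborel)
    \<le> ennreal (v M * - deriv u N + u (-M) * deriv v (-N))"
proof -
  have "(\<integral>\<^sup>+x\<in>{x. N < \<bar>x\<bar>}. ennreal (green u v x t) \<partial>lborel)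
      \<le> (\<integral>\<^sup>+x. ennreal (v M) * (ennreal (u x) * indicator {N..} x)
          + ennreal (u (-M)) * (ennreal (v x) * indicator {..-N} x) \<partial>lborel)"
  proof (intro nn_integral_mono)
    fix x
    have "green u v x t \<le> v M * u x" if "N < x"
      using that assms v_mono[of t M] by (auto simp: green_def mult.commute intro: mult_left_mono)
    moreover have "green u v x t \<le> u (-M) * v x" if "x < -N"
      using that assms u_antimono[of "-M" t] by (auto simp: green_def intro: mult_right_mono)
    ultimately show "ennreal (green u v x t) * indicator {x. N < \<bar>x\<bar>} x
        \<le> ennreal (v M) * (ennreal (u x) * indicator {N..} x) + ennreal (u (-M)) * (ennreal (v x) * indicator {..-N} x)"
      using assms by (auto simp: ennreal_mult[symmetric] split: split_indicator intro!: ennreal_leI)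
  qed
  also have "\<dots> = ennreal (v M) * (\<integral>\<^sup>+x\<in>{N..}. ennreal (u x) \<partial>lborel)
      + ennreal (u (-M)) * (\<integral>\<^sup>+x\<in>{..-N}. ennreal (v x) \<partial>lborel)"
    by (simp add: nn_integral_add nn_integral_cmult)
  also have "\<dots> \<le> ennreal (v M) * ennreal (- deriv u N) + ennreal (u (-M)) * ennreal (deriv v (-N))"
    by (intro add_mono mult_left_mono set_nn_integral_v_atMost set_nn_integral_u_atLeast) auto
  also have "\<dots> = ennreal (v M * - deriv u N + u (-M) * deriv v (-N))"
    using deriv_u_neg[of N] deriv_v_pos[of "-N"]
    by (simp add: ennreal_mult[symmetric], subst ennreal_plus[symmetric])
      (auto simp: mult_nonneg_nonpos algebra_simps)
  finally show ?thesis .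
qed

lemma green_tails_uniformly_small:
  assumes lim: "((\<lambda>x. LINT t|lborel. green u v x t) \<longlongrightarrow> 0) at_infinity" and "0 < \<epsilon>"
  shows "\<exists>N. \<forall>t. (\<integral>\<^sup>+x\<in>{x. N < \<bar>x\<bar>}. ennreal (green u v x t) \<partial>lborel) \<le> ennreal \<epsilon>"
proof -
  from tendstoD[OF lim \<open>0 < \<epsilon>\<close>] obtain M
    where "\<And>t. M \<le> \<bar>t\<bar> \<Longrightarrow> \<bar>LINT x|lborel. green u v t x\<bar> < \<epsilon>"
    unfolding eventually_at_infinity dist_real_def by auto
  then have M: "\<And>t. M \<le> \<bar>t\<bar> \<Longrightarrow> (LINT x|lborel. green u v t x) < \<epsilon>"
    by (meson abs_less_iff)
  have "((\<lambda>N. v M * - deriv u N + u (-M) * deriv v (-N)) \<longlongrightarrow> v M * - 0 + u (-M) * 0) at_top"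
    using PFSS filterlim_compose[OF _ filterlim_uminus_at_bot_at_top, of "deriv v" "nhds 0"]
    unfolding PFSS_def by (intro tendsto_intros) auto
  then have "((\<lambda>N. v M * - deriv u N + u (-M) * deriv v (-N)) \<longlongrightarrow> 0) at_top"
    by simp
  from order_tendstoD(2)[OF this \<open>0 < \<epsilon>\<close>] obtain N0
    where N0: "\<And>N. N0 \<le> N \<Longrightarrow> v M * - deriv u N + u (-M) * deriv v (-N) < \<epsilon>"
    unfolding eventually_at_top_linorder by blast
  define N where "N = max N0 M"
  have "(\<integral>\<^sup>+x\<in>{x. N < \<bar>x\<bar>}. ennreal (green u v x t) \<partial>lborel) \<le> ennreal \<epsilon>" for t
  proof (cases "M \<le> \<bar>t\<bar>")
    case True
    have "(\<integral>\<^sup>+x\<in>{x. N < \<bar>x\<bar>}. ennreal (green u v x t) \<partial>lborel) \<le> (\<integral>\<^sup>+x. ennreal (green u v t x) \<partial>lborel)"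
      by (intro nn_integral_mono) (auto simp: green_sym[of _ t] split: split_indicator)
    also have "\<dots> \<le> ennreal \<epsilon>"
      using M[OF True] by (simp add: nn_integral_green_eq ennreal_leI)
    finally show ?thesis .
  next
    case False
    then have "(\<integral>\<^sup>+x\<in>{x. N < \<bar>x\<bar>}. ennreal (green u v x t) \<partial>lborel)
        \<le> ennreal (v M * - deriv u N + u (-M) * deriv v (-N))"
      by (intro set_nn_integral_green_tail_le) (auto simp: N_def)
    also have "\<dots> \<le> ennreal \<epsilon>"
      using N0[of N] by (intro ennreal_leI) (simp add: N_def)
    finally show ?thesis .
  qed
  then show ?thesis
    by blast
qed

end

section \<open>The Green operator on \<open>L\<^sub>p\<close>\<close>

locale green_Lp = principal_system +
  fixes p :: real
  assumes p: "1 \<le> p"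
begin

lemma integrable_green_mult: "in_Lp p f \<Longrightarrow> integrable lborel (\<lambda>t. green u v x t * f t)"
  using p green_pos green_le integrable_green
  by (intro integrable_bounded_mult_Lp[where c="u x * v x"]) (auto intro: less_imp_le)

lemma in_Lp_abs: "in_Lp p f \<Longrightarrow> in_Lp p (\<lambda>t. \<bar>f t\<bar>)"
  unfolding in_Lp_def by auto

lemma green_op_measurable [measurable]:
  assumes "in_Lp p f"
  shows "green_op u v f \<in> borel_measurable lborel"
proof -
  have [measurable]: "f \<in> borel_measurable lborel"
    using assms by (simp add: in_Lp_def)
  show ?thesis
    unfolding green_op_def by (rule lborel.borel_measurable_lebesgue_integral) simp
qed

lemma abs_green_op_le:
  assumes "in_Lp p f"
  shows "\<bar>green_op u v f x\<bar> \<le> (LINT t|lborel. green u v x t * \<bar>f t\<bar>)"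
  unfolding green_op_def using integrable_green_mult[OF assms] integrable_green_mult[OF in_Lp_abs[OF assms]]
  by (intro integral_abs_bound_integral) (auto simp: abs_mult green_pos less_imp_le)

lemma abs_green_op_powr_le:
  assumes f: "in_Lp p f"
  shows "ennreal (\<bar>green_op u v f x\<bar> powr p) \<le> (\<integral>\<^sup>+t. ennreal (green u v x t * \<bar>f t\<bar> powr p) \<partial>lborel)"
proof -
  have [measurable]: "f \<in> borel_measurable lborel"
    using f by (simp add: in_Lp_def)
  have "ennreal (\<bar>green_op u v f x\<bar> powr p) \<le> ennreal ((LINT t|lborel. green u v x t * \<bar>f t\<bar>) powr p)"
    using abs_green_op_le[OF f] p by (intro ennreal_leI powr_mono2) auto
  also have "\<dots> \<le> (\<integral>\<^sup>+t. ennreal (green u v x t * \<bar>f t\<bar> powr p) \<partial>lborel)"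
    using p green_pos nn_integral_green_le_1 integrable_green_mult[OF in_Lp_abs[OF f]]
    by (intro Jensen_powr_subprob_kernel) (auto intro: less_imp_le)
  finally show ?thesis .
qed

lemma set_nn_integral_green_op_le:
  assumes f: "in_Lp p f" and [measurable]: "S \<in> sets lborel"
    and \<eta>: "\<And>t. (\<integral>\<^sup>+x\<in>S. ennreal (green u v x t) \<partial>lborel) \<le> ennreal \<eta>"
  shows "(\<integral>\<^sup>+x\<in>S. ennreal (\<bar>green_op u v f x\<bar> powr p) \<partial>lborel)
    \<le> ennreal \<eta> * (\<integral>\<^sup>+t. ennreal (\<bar>f t\<bar> powr p) \<partial>lborel)"
proof -
  have [measurable]: "f \<in> borel_measurable lborel"
    using f by (simp add: in_Lp_def)
  have "(\<integral>\<^sup>+x\<in>S. ennreal (\<bar>green_op u v f x\<bar> powr p) \<partial>lborel)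
      \<le> (\<integral>\<^sup>+x. (\<integral>\<^sup>+t. ennreal (green u v x t * \<bar>f t\<bar> powr p) * indicator S x \<partial>lborel) \<partial>lborel)"
    using abs_green_op_powr_le[OF f]
    by (intro nn_integral_mono) (auto simp: nn_integral_multc split: split_indicator)
  also have "\<dots> = (\<integral>\<^sup>+t. (\<integral>\<^sup>+x. ennreal (green u v x t * \<bar>f t\<bar> powr p) * indicator S x \<partial>lborel) \<partial>lborel)"
    by (rule lborel_pair.Fubini'[symmetric]) measurable
  also have "\<dots> = (\<integral>\<^sup>+t. ennreal (\<bar>f t\<bar> powr p) * (\<integral>\<^sup>+x\<in>S. ennreal (green u v x t) \<partial>lborel) \<partial>lborel)"
    using green_pos
    by (intro nn_integral_cong, subst nn_integral_cmult[symmetric])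
      (auto intro!: nn_integral_cong simp: ennreal_mult less_imp_le mult_ac)
  also have "\<dots> \<le> (\<integral>\<^sup>+t. ennreal (\<bar>f t\<bar> powr p) * ennreal \<eta> \<partial>lborel)"
    by (intro nn_integral_mono mult_left_mono \<eta>) auto
  also have "\<dots> = ennreal \<eta> * (\<integral>\<^sup>+t. ennreal (\<bar>f t\<bar> powr p) \<partial>lborel)"
    by (subst nn_integral_multc) (auto simp: mult.commute)
  finally show ?thesis .
qed

lemma green_op_in_Lp:
  assumes f: "in_Lp p f"
  shows "in_Lp p (green_op u v f)"
  unfolding in_Lp_def
proof
  show "green_op u v f \<in> borel_measurable lborel"
    using f by measurable
  have mass: "(\<integral>\<^sup>+x\<in>UNIV. ennreal (green u v x t) \<partial>lborel) \<le> ennreal 1" for t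
    using nn_integral_green_le_1[of t] by (simp add: green_sym[of _ t])
  have "(\<integral>\<^sup>+x\<in>UNIV. ennreal (\<bar>green_op u v f x\<bar> powr p) \<partial>lborel) \<le> ennreal 1 * (\<integral>\<^sup>+t. ennreal (\<bar>f t\<bar> powr p) \<partial>lborel)"
    using set_nn_integral_green_op_le[OF f _ mass] by simp
  also have "\<dots> < \<infinity>"
    using f by (simp add: in_Lp_def nn_integral_eq_integral)
  finally show "integrable lborel (\<lambda>x. \<bar>green_op u v f x\<bar> powr p)"
    using f by (intro integrableI_bounded) auto
qed

lemma abs_green_op_powr_le_uv:
  assumes f: "in_Lp p f"
  shows "\<bar>green_op u v f x\<bar> powr p \<le> u x * v x * (LINT t|lborel. \<bar>f t\<bar> powr p)"
proof -
  have "\<bar>green_op u v f x\<bar> powr p \<le> (LINT t|lborel. green u v x t * \<bar>f t\<bar>) powr p"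
    using abs_green_op_le[OF f] p by (intro powr_mono2) auto
  also have "\<dots> \<le> u x * v x * (LINT t|lborel. \<bar>f t\<bar> powr p)"
    using green_pos green_le integrable_green integral_green_le_1
    by (intro integral_kernel_powr_le[OF p f]) (auto intro: less_imp_le)
  finally show ?thesis .
qed

lemma abs_green_op_diff_powr_le:
  assumes f: "in_Lp p f" and xy: "x \<in> {-N..N}" "y \<in> {-N..N}"
  shows "\<bar>green_op u v f y - green_op u v f x\<bar> powr p
    \<le> 2 powr p * (v N * \<bar>u x - u y\<bar> + u (-N) * \<bar>v x - v y\<bar>) * (LINT t|lborel. \<bar>f t\<bar> powr p)"
proof -
  define \<omega> where "\<omega> = v N * \<bar>u x - u y\<bar> + u (-N) * \<bar>v x - v y\<bar>"
  define K where "K t = \<bar>green u v y t - green u v x t\<bar> / 2" for t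
  have K_le: "K t \<le> \<omega> / 2" for t
    unfolding K_def \<omega>_def using abs_green_diff_le[OF xy] by simp
  have "(LINT t|lborel. K t) \<le> (LINT t|lborel. (green u v y t + green u v x t) / 2)"
    unfolding K_def using integrable_green green_pos
    by (intro integral_mono) (auto simp: abs_le_iff less_imp_le)
  also have "\<dots> \<le> 1"
    using integrable_green integral_green_le_1[of x] integral_green_le_1[of y] by simp
  finally have K_mass: "(LINT t|lborel. K t) \<le> 1" .
  have K: "integrable lborel K"
    unfolding K_def using integrable_green by auto
  have [measurable]: "K \<in> borel_measurable lborel"
    unfolding K_def by measurable
  have diff_f: "integrable lborel (\<lambda>t. (green u v y t - green u v x t) * f t)"
    using integrable_green_mult[OF f] by (simp add: left_diff_distrib)
  have K_f: "integrable lborel (\<lambda>t. K t * \<bar>f t\<bar>)"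
    by (intro integrable_bounded_mult_Lp[OF p in_Lp_abs[OF f] _ _ K_le K]) (auto simp: K_def)
  have "green_op u v f y - green_op u v f x = (LINT t|lborel. (green u v y t - green u v x t) * f t)"
    unfolding green_op_def using integrable_green_mult[OF f] by (simp add: left_diff_distrib)
  also have "\<bar>\<dots>\<bar> \<le> (LINT t|lborel. 2 * (K t * \<bar>f t\<bar>))"
    by (rule integral_abs_bound_integral[OF diff_f integrable_mult_right[OF K_f]]) (simp add: K_def abs_mult)
  finally have "\<bar>green_op u v f y - green_op u v f x\<bar> \<le> 2 * (LINT t|lborel. K t * \<bar>f t\<bar>)"
    by simp
  then have "\<bar>green_op u v f y - green_op u v f x\<bar> powr p \<le> (2 * (LINT t|lborel. K t * \<bar>f t\<bar>)) powr p"
    using p by (intro powr_mono2) auto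
  also have "\<dots> = 2 powr p * (LINT t|lborel. K t * \<bar>f t\<bar>) powr p"
  proof -
    have "0 \<le> (LINT t|lborel. K t * \<bar>f t\<bar>)"
      by (intro integral_nonneg_AE) (simp add: K_def)
    then show ?thesis
      by (simp add: powr_mult)
  qed
  also have "\<dots> \<le> 2 powr p * (\<omega> / 2 * (LINT t|lborel. \<bar>f t\<bar> powr p))"
    using K_le K_mass integrable_green
    by (intro mult_left_mono integral_kernel_powr_le[OF p f]) (auto simp: K_def)
  also have "\<dots> \<le> 2 powr p * \<omega> * (LINT t|lborel. \<bar>f t\<bar> powr p)"
    by (auto intro!: mult_right_mono integral_nonneg_AE simp: \<omega>_def)
  finally show ?thesis
    unfolding \<omega>_def .
qed

lemma green_op_equicontinuous:
  fixes F :: "nat \<Rightarrow> real \<Rightarrow> real"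
  assumes F: "\<And>k. in_Lp p (F k)" and C: "\<And>k. (LINT t|lborel. \<bar>F k t\<bar> powr p) \<le> C"
    and "0 < \<epsilon>"
  shows "\<exists>\<delta>>0. \<forall>y k. \<bar>y - x\<bar> < \<delta> \<longrightarrow> \<bar>green_op u v (F k) y - green_op u v (F k) x\<bar> < \<epsilon>"
proof -
  define N where "N = \<bar>x\<bar> + 1"
  define \<omega> where "\<omega> y = 2 powr p * (v N * \<bar>u x - u y\<bar> + u (-N) * \<bar>v x - v y\<bar>) * C" for y
  have "(\<omega> \<longlongrightarrow> \<omega> x) (at x)"
    unfolding \<omega>_def using isCont_u[of x] isCont_v[of x] by (intro tendsto_intros) (auto simp: isCont_def)
  moreover have "\<omega> x < \<epsilon> powr p"
    using \<open>0 < \<epsilon>\<close> by (simp add: \<omega>_def)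
  ultimately have "\<forall>\<^sub>F y in at x. \<omega> y < \<epsilon> powr p"
    by (rule order_tendstoD(2))
  then obtain \<delta>0 where "0 < \<delta>0" and \<delta>0: "\<And>y. y \<noteq> x \<Longrightarrow> dist y x < \<delta>0 \<Longrightarrow> \<omega> y < \<epsilon> powr p"
    unfolding eventually_at by blast
  define \<delta> where "\<delta> = min \<delta>0 1"
  have "\<bar>green_op u v (F k) y - green_op u v (F k) x\<bar> < \<epsilon>" if "\<bar>y - x\<bar> < \<delta>" for y k
  proof (cases "y = x")
    case False
    with \<delta>0 that have \<omega>y: "\<omega> y < \<epsilon> powr p" and "\<bar>y - x\<bar> < 1"
      by (auto simp: dist_real_def \<delta>_def)
    then have "x \<in> {-N..N}" "y \<in> {-N..N}"
      by (auto simp: N_def)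
    then have "\<bar>green_op u v (F k) y - green_op u v (F k) x\<bar> powr p
        \<le> 2 powr p * (v N * \<bar>u x - u y\<bar> + u (-N) * \<bar>v x - v y\<bar>) * (LINT t|lborel. \<bar>F k t\<bar> powr p)"
      by (rule abs_green_op_diff_powr_le[OF F])
    also have "\<dots> \<le> \<omega> y"
      unfolding \<omega>_def using C by (intro mult_left_mono) auto
    finally have "\<bar>green_op u v (F k) y - green_op u v (F k) x\<bar> powr p < \<epsilon> powr p"
      using \<omega>y by simp
    then have "\<not> \<epsilon> \<le> \<bar>green_op u v (F k) y - green_op u v (F k) x\<bar>"
      using \<open>0 < \<epsilon>\<close> p powr_mono2[of p \<epsilon>] by force
    then show ?thesis
      by simp
  qed (use \<open>0 < \<epsilon>\<close> in simp)
  moreover have "0 < \<delta>"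
    using \<open>0 < \<delta>0\<close> by (simp add: \<delta>_def)
  ultimately show ?thesis
    by blast
qed

lemma abs_green_op_le_root:
  assumes f: "in_Lp p f" and C: "(LINT t|lborel. \<bar>f t\<bar> powr p) \<le> C"
  shows "\<bar>green_op u v f x\<bar> \<le> (u x * v x * C) powr (1 / p)"
proof -
  have "\<bar>green_op u v f x\<bar> = (\<bar>green_op u v f x\<bar> powr p) powr (1 / p)"
    using p by (simp add: powr_powr)
  also have "\<dots> \<le> (u x * v x * C) powr (1 / p)"
    using abs_green_op_powr_le_uv[OF f, of x] mult_left_mono[OF C, of "u x * v x"] p
    by (intro powr_mono2) auto
  finally show ?thesis .
qed

lemma green_op_locally_bounded:
  fixes F :: "nat \<Rightarrow> real \<Rightarrow> real"
  assumes F: "\<And>k. in_Lp p (F k)" and C: "\<And>k. (LINT t|lborel. \<bar>F k t\<bar> powr p) \<le> C"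
  shows "\<exists>D. \<forall>k. \<forall>x\<in>{-N..N}. \<bar>green_op u v (F k) x\<bar> \<le> D"
proof (intro exI ballI allI)
  fix k x assume "x \<in> {-N..N}"
  have "0 \<le> (LINT t|lborel. \<bar>F k t\<bar> powr p)"
    by (intro integral_nonneg_AE) auto
  then have "0 \<le> C"
    using C[of k] by linarith
  with \<open>x \<in> {-N..N}\<close> have "u x * v x * C \<le> u (-N) * v N * C"
    using u_antimono[of "-N" x] v_mono[of x N] by (intro mult_right_mono mult_mono) auto
  then have "(u x * v x * C) powr (1 / p) \<le> (u (-N) * v N * C) powr (1 / p)"
    using p \<open>0 \<le> C\<close> by (intro powr_mono2) auto
  then show "\<bar>green_op u v (F k) x\<bar> \<le> (u (-N) * v N * C) powr (1 / p)"
    using abs_green_op_le_root[OF F C, of k x] by linarith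
qed

lemma green_op_tails_uniformly_small:
  fixes F :: "nat \<Rightarrow> real \<Rightarrow> real"
  assumes lim: "((\<lambda>x. LINT t|lborel. green u v x t) \<longlongrightarrow> 0) at_infinity"
    and F: "\<And>k. in_Lp p (F k)" and C: "\<And>k. (LINT t|lborel. \<bar>F k t\<bar> powr p) \<le> C"
    and "0 < \<epsilon>"
  shows "\<exists>N. \<forall>k. (\<integral>\<^sup>+x\<in>{x. N < \<bar>x\<bar>}. ennreal (\<bar>green_op u v (F k) x\<bar> powr p) \<partial>lborel) \<le> ennreal \<epsilon>"
proof -
  have "0 \<le> (LINT t|lborel. \<bar>F 0 t\<bar> powr p)"
    by (intro integral_nonneg_AE) auto
  then have "0 \<le> C"
    using C[of 0] by linarith
  obtain N where N: "\<And>t. (\<integral>\<^sup>+x\<in>{x. N < \<bar>x\<bar>}. ennreal (green u v x t) \<partial>lborel) \<le> ennreal (\<epsilon> / (C + 1))"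
    using green_tails_uniformly_small[OF lim, of "\<epsilon> / (C + 1)"] \<open>0 < \<epsilon>\<close> \<open>0 \<le> C\<close> by auto
  have "(\<integral>\<^sup>+x\<in>{x. N < \<bar>x\<bar>}. ennreal (\<bar>green_op u v (F k) x\<bar> powr p) \<partial>lborel) \<le> ennreal \<epsilon>" for k
  proof -
    have "(\<integral>\<^sup>+x\<in>{x. N < \<bar>x\<bar>}. ennreal (\<bar>green_op u v (F k) x\<bar> powr p) \<partial>lborel)
        \<le> ennreal (\<epsilon> / (C + 1)) * (\<integral>\<^sup>+t. ennreal (\<bar>F k t\<bar> powr p) \<partial>lborel)"
      by (rule set_nn_integral_green_op_le[OF F _ N]) simp
    also have "\<dots> \<le> ennreal (\<epsilon> / (C + 1)) * ennreal C"
      using F[of k] C[of k] by (intro mult_left_mono) (auto simp: in_Lp_def nn_integral_eq_integral intro!: ennreal_leI)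
    also have "\<dots> = ennreal (\<epsilon> / (C + 1) * C)"
      using \<open>0 < \<epsilon>\<close> \<open>0 \<le> C\<close> by (intro ennreal_mult[symmetric]) auto
    also have "\<dots> \<le> ennreal \<epsilon>"
      using \<open>0 < \<epsilon>\<close> \<open>0 \<le> C\<close> by (intro ennreal_leI) (simp add: field_simps)
    finally show ?thesis .
  qed
  then show ?thesis
    by blast
qed

lemma green_op_Lp_convergent_subseq:
  fixes F :: "nat \<Rightarrow> real \<Rightarrow> real"
  assumes lim: "((\<lambda>x. LINT t|lborel. green u v x t) \<longlongrightarrow> 0) at_infinity"
    and F: "\<And>n. in_Lp p (F n)" and B: "\<And>n. Lp_norm p (F n) \<le> B"
  shows "\<exists>r g. strict_mono r \<and> in_Lp p g \<and> (\<lambda>n. Lp_norm p (\<lambda>x. green_op u v (F (r n)) x - g x)) \<longlonglongrightarrow> 0"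
proof -
  have "0 < p"
    using p by simp
  have C: "(LINT t|lborel. \<bar>F n t\<bar> powr p) \<le> B powr p" for n
    using \<open>0 < p\<close> B by (rule integral_powr_le_of_Lp_norm_le)
  obtain s g where s: "strict_mono s" and g: "\<And>x. (\<lambda>k. green_op u v (F (s k)) x) \<longlonglongrightarrow> g x"
    using equicontinuous_imp_pointwise_convergent_subseq[where h="\<lambda>k. green_op u v (F k)",
        OF abs_green_op_le_root[OF F C] green_op_equicontinuous[OF F C]]
    by blast
  note tight_locally_bounded = \<open>0 < p\<close> green_op_measurable[OF F] g
    green_op_locally_bounded[where F="\<lambda>k. F (s k)", OF F C]
    green_op_tails_uniformly_small[where F="\<lambda>k. F (s k)", OF lim F C]
  have "in_Lp p g"
    by (rule in_Lp_limit_of_tight_locally_bounded[OF tight_locally_bounded])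
  moreover have "(\<lambda>k. LINT x|lborel. \<bar>green_op u v (F (s k)) x - g x\<bar> powr p) \<longlonglongrightarrow> 0"
    by (rule Lp_convergence_of_tight_locally_bounded[OF tight_locally_bounded])
  then have "(\<lambda>n. Lp_norm p (\<lambda>x. green_op u v (F (s n)) x - g x)) \<longlonglongrightarrow> 0"
    unfolding Lp_norm_def
    by (rule tendsto_zero_powrI[OF _ tendsto_const])
      (use \<open>0 < p\<close> in \<open>auto intro!: always_eventually integral_nonneg_AE\<close>)
  ultimately show ?thesis
    using s by blast
qed

end

theorem theorem5p1:
  fixes q u v :: "real \<Rightarrow> real" and p :: real
  assumes "admissible_potential q"
    and "PFSS q u v"
    and "p \<ge> 1"
    and "((\<lambda>x. LINT t|lborel. green u v x t) \<longlongrightarrow> 0) at_infinity"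
  shows "compact_green_Lp p u v"
proof -
  interpret green_Lp q u v p
    using assms by unfold_locales
  show ?thesis
    unfolding compact_green_Lp_def
  proof (intro conjI allI impI)
    fix F :: "nat \<Rightarrow> real \<Rightarrow> real"
    assume "(\<forall>n. in_Lp p (F n)) \<and> (\<exists>B. \<forall>n. Lp_norm p (F n) \<le> B)"
    then show "\<exists>r g. strict_mono r \<and> in_Lp p g \<and> (\<lambda>n. Lp_norm p (\<lambda>x. green_op u v (F (r n)) x - g x)) \<longlonglongrightarrow> 0"
      using green_op_Lp_convergent_subseq[OF assms(4)] by blast
  qed (simp_all add: integrable_green_mult green_op_in_Lp)
qed

end
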